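(* Let $n\ge 2$ and let $p$ be a strongly 312-avoiding permutation of $\{1,\dots,n\}$ with $p_n=1$. If $p_1>p_2$, then $p$ is the decreasing permutation $n\,(n-1)\cdots 2\,1$.
   Context: Permutations are written in one-line notation $p=p_1\cdots p_n$ with $p_i=p(i)$. $p$ contains a pattern $q=q_1\cdots q_m$ if there are indices $i_1<\cdots<i_m$ with $p_{i_r}<p_{i_s}$ iff $q_r<q_s$; otherwise $p$ avoids $q$. $p^2(i)=p(p(i))$. A permutation $p$ is strongly $q$-avoiding if both $p$ and $p^2$ avoid $q$. *)

theory Defs
  imports "HOL-Combinatorics.Permutations"
begin

text \<open>A permutation of {1..n} is a function p :: nat => nat with p permutes {1..n}
  (one-line notation p_i = p i). A pattern q = q_1 ... q_m is given as a list
  (q_r = q ! (r-1)).  p contains q if there are indices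
  1 <= i_1 < ... < i_m <= n with p(i_r) < p(i_s) iff q_r < q_s.\<close>

definition contains_pattern :: "nat \<Rightarrow> (nat \<Rightarrow> nat) \<Rightarrow> nat list \<Rightarrow> bool" where
  "contains_pattern n p q \<longleftrightarrow>
     (\<exists>i :: nat \<Rightarrow> nat.
        (\<forall>r < length q. i r \<in> {1..n}) \<and>
        (\<forall>r s. r < s \<and> s < length q \<longrightarrow> i r < i s) \<and>
        (\<forall>r < length q. \<forall>s < length q. (p (i r) < p (i s) \<longleftrightarrow> q ! r < q ! s)))"

definition avoids_pattern :: "nat \<Rightarrow> (nat \<Rightarrow> nat) \<Rightarrow> nat list \<Rightarrow> bool" where
  "avoids_pattern n p q \<longleftrightarrow> \<not> contains_pattern n p q"

definition strongly_avoiding :: "nat \<Rightarrow> (nat \<Rightarrow> nat) \<Rightarrow> nat list \<Rightarrow> bool" where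
  "strongly_avoiding n p q \<longleftrightarrow> avoids_pattern n p q \<and> avoids_pattern n (p \<circ> p) q"

end

theory Submission
  imports Defs
begin

text \<open>Write \<open>a = p 1\<close>. Since \<open>p\<^sup>2 n = a\<close> and \<open>p\<^sup>2\<close> avoids 312, every position of
  \<open>p\<^sup>2\<close> carrying a value below \<open>a\<close> precedes every position carrying a value above \<open>a\<close>,
  so the values below \<open>a\<close> sit at the positions below \<open>a\<close>. Applied to the preimages of
  \<open>n\<close> and of \<open>2\<close> this puts \<open>p\<^sup>-\<^sup>1 n\<close> and, since \<open>p\<close> avoids 312 and hence lists the values
  below \<open>a\<close> in decreasing order, all of \<open>p\<^sup>-\<^sup>1 {2..<a}\<close> into \<open>{2..<a}\<close>; by pigeonhole \<open>a = n\<close>.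
  Then \<open>p\<close> is decreasing after its first entry, hence everywhere, and must be the reversal.\<close>

lemma contains_312I:
  assumes "1 \<le> x" "x < y" "y < z" "z \<le> n" "f y < f z" "f z < f x"
  shows "contains_pattern n f [3, 1, 2]"
  unfolding contains_pattern_def
  by (rule exI[of _ "\<lambda>r. [x, y, z] ! r"])
    (use assms in \<open>auto simp: less_Suc_eq numeral_eq_Suc\<close>)

lemma avoids_312_small_values_before_last:
  assumes perm: "q permutes {1..n}" and avoid: "avoids_pattern n q [3, 1, 2]"
    and "j < n" and small: "q j < q n"
  shows "j < q n"
proof -
  define a where "a = q n"
  define B where "B = {i \<in> {1..n}. a < q i}"
  have "q n \<in> {1..n}" using permutes_in_image[OF perm, of n] \<open>j < n\<close> by simp
  then have a_le: "a \<le> n" by (simp add: a_def)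
  have "q ` B = q ` {1..n} \<inter> {a<..}" unfolding B_def by auto
  also have "\<dots> = {a<..n}" using permutes_image[OF perm] a_le by auto
  finally have "q ` B = {a<..n}" .
  then have card_B: "card B = n - a"
    by (metis card_greaterThanAtMost card_image permutes_inj_on[OF perm])
  \<comment> \<open>a large value before position \<open>j\<close> would form a 312 with \<open>j\<close> and \<open>n\<close>\<close>
  have "B \<subseteq> {j<..<n}"
  proof
    fix i assume "i \<in> B"
    then have i: "1 \<le> i" "i \<le> n" "a < q i" unfolding B_def by auto
    have "\<not> i < j"
      using contains_312I[of i j n n q] avoid i \<open>j < n\<close> small
      by (auto simp: avoids_pattern_def a_def)
    moreover have "i \<noteq> j" "i \<noteq> n" using i small by (auto simp: a_def)
    ultimately show "i \<in> {j<..<n}" using i by auto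
  qed
  then have "card B \<le> n - Suc j" by (metis card_greaterThanLessThan card_mono finite_greaterThanLessThan)
  then show ?thesis using card_B a_le \<open>j < n\<close> by (simp add: a_def)
qed

lemma avoids_312_decreasing_below_first:
  assumes "inj p" and avoid: "avoids_pattern n p [3, 1, 2]"
    and "1 < i" "i < j" "j \<le> n" "p i < p 1" "p j < p 1"
  shows "p j < p i"
proof -
  have "p i \<noteq> p j" using \<open>inj p\<close> \<open>i < j\<close> by (auto dest: injD)
  moreover have "\<not> p i < p j"
    using contains_312I[of 1 i j n p] avoid assms(3-) by (auto simp: avoids_pattern_def)
  ultimately show ?thesis by simp
qed

lemma decreasing_self_map_eq_reversal:
  fixes f :: "nat \<Rightarrow> nat"
  assumes maps: "f ` {1..n} \<subseteq> {1..n}"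
    and decr: "\<And>i. 1 \<le> i \<Longrightarrow> i < n \<Longrightarrow> f (Suc i) < f i"
    and "i \<in> {1..n}"
  shows "f i = n + 1 - i"
proof -
  have "1 \<le> i" "i \<le> n" using \<open>i \<in> {1..n}\<close> by auto
  have "f i \<ge> n + 1 - i" using \<open>i \<le> n\<close> \<open>1 \<le> i\<close>
  proof (induction i rule: inc_induct)
    case base then show ?case using maps by (auto simp: image_subset_iff)
  next
    case (step m) then show ?case using decr[of m] by fastforce
  qed
  moreover have "f i \<le> n + 1 - i" using \<open>1 \<le> i\<close> \<open>i \<le> n\<close>
  proof (induction i rule: dec_induct)
    case base then show ?case using maps by (auto simp: image_subset_iff)
  next
    case (step m) then show ?case using decr[of m] by fastforce
  qed
  ultimately show ?thesis by simp
qed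

lemma strongly_312_avoiding_inv_lt_first:
  assumes perm: "p permutes {1..n}" and avoid: "avoids_pattern n (p \<circ> p) [3, 1, 2]"
    and last: "p n = 1" and "v \<in> {1..n}" "v \<noteq> 1" "p v < p 1"
  shows "inv p v < p 1"
proof -
  have p_inv: "p (inv p v) = v" using permutes_inverses(1)[OF perm] .
  then have "inv p v \<noteq> n" using last \<open>v \<noteq> 1\<close> by metis
  moreover have "inv p v \<in> {1..n}"
    using \<open>v \<in> {1..n}\<close> permutes_in_image[OF permutes_inv[OF perm]] by blast
  ultimately have "inv p v < n" by simp
  then show ?thesis
    using avoids_312_small_values_before_last[OF permutes_compose[OF perm perm] avoid]
      \<open>p v < p 1\<close> last p_inv by simp
qed

lemma strongly_312_avoiding_first_eq_max:
  assumes "n \<ge> 2" and perm: "p permutes {1..n}"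
    and avoid: "strongly_avoiding n p [3, 1, 2]"
    and last: "p n = 1" and descent: "p 2 < p 1"
  shows "p 1 = n"
proof (rule ccontr)
  assume "p 1 \<noteq> n"
  define a where "a = p 1"
  have in_range: "\<And>x. x \<in> {1..n} \<Longrightarrow> p x \<in> {1..n}" using permutes_in_image[OF perm] by blast
  have "a < n" "2 \<le> a"
    using in_range[of 1] in_range[of 2] \<open>n \<ge> 2\<close> \<open>p 1 \<noteq> n\<close> descent by (auto simp: a_def)
  have avoid_p: "avoids_pattern n p [3, 1, 2]"
    and avoid_pp: "avoids_pattern n (p \<circ> p) [3, 1, 2]"
    using avoid by (auto simp: strongly_avoiding_def)
  have inv_in: "inv p v \<in> {1..n}" if "v \<in> {1..n}" for v
    using that permutes_in_image[OF permutes_inv[OF perm]] by blast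
  have p_inv: "p (inv p v) = v" for v using permutes_inverses(1)[OF perm] .
  have inv_lt_a: "inv p v < a" if "v \<in> {1..n}" "v \<noteq> 1" "p v < a" for v
    using strongly_312_avoiding_inv_lt_first[OF perm avoid_pp last, of v] that unfolding a_def by blast
  define V where "V = {2..<a} \<union> {n}"
  have "inv p ` V \<subseteq> {2..<a}"
  proof
    fix t assume "t \<in> inv p ` V"
    then obtain v where v: "v \<in> V" "t = inv p v" by blast
    then have "v \<in> {1..n}" "v \<noteq> a" using \<open>a < n\<close> \<open>2 \<le> a\<close> by (auto simp: V_def)
    then have "t \<in> {1..n}" using v inv_in by simp
    have "t \<noteq> 1" using \<open>v \<noteq> a\<close> v(2) p_inv by (metis a_def)
    moreover have "t < a"
    proof (cases "v = n")
      case True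
      then show ?thesis using inv_lt_a[of n] v last \<open>2 \<le> a\<close> \<open>n \<ge> 2\<close> by auto
    next
      case False
      then have "2 \<le> v" "v < a" using v by (auto simp: V_def)
      define j where "j = inv p 2"
      have "j < a" using inv_lt_a[of 2] descent \<open>n \<ge> 2\<close> by (auto simp: j_def a_def)
      have "j \<in> {1..n}" "j \<noteq> 1"
        using inv_in[of 2] p_inv[of 2] \<open>n \<ge> 2\<close> \<open>2 \<le> v\<close> \<open>v < a\<close> by (auto simp: j_def a_def)
      then have "1 < j" by simp
      \<comment> \<open>values below \<open>a\<close> occur in decreasing order, so \<open>v \<ge> 2\<close> cannot come after \<open>2\<close>\<close>
      moreover have "\<not> j < t"
        using avoids_312_decreasing_below_first[OF permutes_inj[OF perm] avoid_p, of j t]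
          \<open>t \<in> {1..n}\<close> v p_inv \<open>2 \<le> v\<close> \<open>v < a\<close> descent \<open>1 < j\<close>
        by (auto simp: j_def a_def)
      ultimately show ?thesis using \<open>j < a\<close> by simp
    qed
    ultimately show "t \<in> {2..<a}" using \<open>t \<in> {1..n}\<close> by simp
  qed
  moreover have "inj_on (inv p) V" using permutes_inj[OF permutes_inv[OF perm]] inj_on_subset by blast
  ultimately have "card V \<le> card {2..<a}" by (metis card_image card_mono finite_atLeastLessThan)
  then show False using \<open>a < n\<close> \<open>2 \<le> a\<close> by (simp add: V_def)
qed

theorem lemma3p5:
  fixes n :: nat and p :: "nat \<Rightarrow> nat"
  assumes "n \<ge> 2"
    and "p permutes {1..n}"
    and "strongly_avoiding n p [3, 1, 2]"
    and "p n = 1"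
    and "p 1 > p 2"
  shows "\<forall>i \<in> {1..n}. p i = n + 1 - i"
proof -
  note perm = \<open>p permutes {1..n}\<close>
  have first: "p 1 = n" by (rule strongly_312_avoiding_first_eq_max[OF assms])
  have avoid_p: "avoids_pattern n p [3, 1, 2]"
    using \<open>strongly_avoiding n p [3, 1, 2]\<close> by (simp add: strongly_avoiding_def)
  have maps: "p ` {1..n} \<subseteq> {1..n}" using permutes_image[OF perm] by simp
  have below_first: "p i < p 1" if "2 \<le> i" "i \<le> n" for i
  proof -
    have "p i \<in> {1..n}" using maps that by (auto simp: image_subset_iff)
    moreover have "p i \<noteq> p 1" using injD[OF permutes_inj[OF perm], of i 1] that by auto
    ultimately show ?thesis using first by simp
  qed
  have decreasing: "p (Suc i) < p i" if "1 \<le> i" "i < n" for i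
  proof (cases "i = 1")
    case True
    then show ?thesis using \<open>p 1 > p 2\<close> by (metis one_add_one plus_1_eq_Suc)
  next
    case False
    then show ?thesis
      using avoids_312_decreasing_below_first[OF permutes_inj[OF perm] avoid_p, of i "Suc i"]
        below_first[of i] below_first[of "Suc i"] that by simp
  qed
  show ?thesis using decreasing_self_map_eq_reversal[OF maps decreasing] by blast
qed

end
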